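(* Let $\alpha$ be a sequence such that $M(\alpha)$ is a bounded multiplicative Hankel operator on $\ell^2(\mathbb{N})$, and for $0<r<1$ let $\alpha_r=D_r\alpha$. Then $M(\alpha)$ is compact if and only if $\lim_{r\to1}\|M(\alpha_r)-M(\alpha)\|_{\mathcal{B}(\ell^2(\mathbb{N}))}=0$.
   Context: For a sequence $\alpha\colon\mathbb{N}\to\mathbb{C}$, $M(\alpha)$ is defined by $\langle M(\alpha)a,b\rangle_{\ell^2(\mathbb{N})}=\sum_{n,m}a(n)\overline{b(m)}\alpha(nm)$ for finitely supported $a,b$, and is bounded if it extends to a bounded operator on $\ell^2(\mathbb{N})$. Let $p_1<p_2<\dots$ be the primes. For a sequence $a$ and $0<r<1$, $D_ra(n)=r^{\sum_{j\ge1}j\kappa_j}a(n)$ where $n=\prod_{j\ge1}p_j^{\kappa_j}$. *)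

theory Defs
  imports "HOL-Analysis.Analysis" "HOL-Computational_Algebra.Primes"
begin

text \<open>Sequences on \<nat> = {1,2,...} are modelled as functions nat \<Rightarrow> complex;
  the value at index 0 is ignored throughout (all sums range over {1..}).\<close>

definition l2 :: "(nat \<Rightarrow> complex) set" where
  "l2 = {a. (\<lambda>n. (cmod (a n))\<^sup>2) summable_on {1..}}"

definition l2norm :: "(nat \<Rightarrow> complex) \<Rightarrow> real" where
  "l2norm a = sqrt (\<Sum>\<^sub>\<infinity>n\<in>{1..}. (cmod (a n))\<^sup>2)"

definition fin_supp :: "(nat \<Rightarrow> complex) \<Rightarrow> bool" where
  "fin_supp a \<longleftrightarrow> finite {n\<in>{1..}. a n \<noteq> 0}"

definition MH_form :: "(nat \<Rightarrow> complex) \<Rightarrow> (nat \<Rightarrow> complex) \<Rightarrow> (nat \<Rightarrow> complex) \<Rightarrow> complex" where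
  "MH_form \<alpha> a b = (\<Sum>n\<in>{n\<in>{1..}. a n \<noteq> 0}. \<Sum>m\<in>{m\<in>{1..}. b m \<noteq> 0}.
       a n * cnj (b m) * \<alpha> (n * m))"

definition MH_bounded :: "(nat \<Rightarrow> complex) \<Rightarrow> bool" where
  "MH_bounded \<alpha> \<longleftrightarrow> (\<exists>C. \<forall>a b. fin_supp a \<longrightarrow> fin_supp b \<longrightarrow>
       cmod (MH_form \<alpha> a b) \<le> C * l2norm a * l2norm b)"

definition MH :: "(nat \<Rightarrow> complex) \<Rightarrow> (nat \<Rightarrow> complex) \<Rightarrow> (nat \<Rightarrow> complex)" where
  "MH \<alpha> a = (\<lambda>m. \<Sum>\<^sub>\<infinity>n\<in>{1..}. \<alpha> (n * m) * a n)"

definition op_norm :: "((nat \<Rightarrow> complex) \<Rightarrow> (nat \<Rightarrow> complex)) \<Rightarrow> real" where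
  "op_norm T = Sup {l2norm (T a) | a. a \<in> l2 \<and> l2norm a \<le> 1}"

definition compact_op :: "((nat \<Rightarrow> complex) \<Rightarrow> (nat \<Rightarrow> complex)) \<Rightarrow> bool" where
  "compact_op T \<longleftrightarrow> (\<forall>x::nat \<Rightarrow> nat \<Rightarrow> complex. (\<forall>k. x k \<in> l2 \<and> l2norm (x k) \<le> 1) \<longrightarrow>
      (\<exists>s b. strict_mono s \<and> b \<in> l2 \<and> (\<lambda>k. l2norm (T (x (s k)) - b)) \<longlonglongrightarrow> 0))"

text \<open>Index j of a prime p = p_j, i.e. the number of primes \<le> p.\<close>
definition prime_index :: "nat \<Rightarrow> nat" where
  "prime_index p = card {q. prime q \<and> q \<le> p}"

definition weight :: "nat \<Rightarrow> nat" where
  "weight n = (\<Sum>p\<in>prime_factors n. prime_index p * multiplicity p n)"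

definition Dr :: "real \<Rightarrow> (nat \<Rightarrow> complex) \<Rightarrow> (nat \<Rightarrow> complex)" where
  "Dr r a = (\<lambda>n. complex_of_real (r ^ weight n) * a n)"

end

theory Submission
  imports Defs
begin

text \<open>
  Because the weight is additive, \<open>M(D\<^sub>r\<alpha>) = D\<^sub>r M(\<alpha>) D\<^sub>r\<close>, and for \<open>r < 1\<close> the diagonal
  operator \<open>D\<^sub>r\<close> is compact: it lies within \<open>r\<^sup>K\<close> of the projection onto the finitely
  many \<open>n\<close> of weight at most \<open>K\<close>. So if \<open>M(\<alpha>\<^sub>r) \<rightarrow> M(\<alpha>)\<close> in norm, \<open>M(\<alpha>)\<close> is a
  norm limit of the compact operators \<open>D\<^sub>r M(\<alpha>) D\<^sub>r\<close>, hence compact. Conversely, \<open>D\<^sub>r \<rightarrow> I\<close>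
  strongly as \<open>r \<rightarrow> 1\<close>, and compactness upgrades this to norm convergence: for unit vectors
  \<open>w\<^sub>k\<close> converging weakly to \<open>l\<close>, compactness of \<open>M(\<alpha>)\<close> absorbs the weakly null part
  \<open>w\<^sub>k - l\<close>, while \<open>D\<^sub>r l \<rightarrow> l\<close> and \<open>D\<^sub>r M(\<alpha>) l \<rightarrow> M(\<alpha>) l\<close> take care of the limit.
  Compactness is used in its sequential form, and weak convergence of bounded sequences in
  \<open>\<ell>\<^sup>2\<close> is coordinatewise convergence.
\<close>

section \<open>Sequences and sums\<close>

lemma LIMSEQ_zero_by_approx:
  fixes f :: "nat \<Rightarrow> real"
  assumes "\<And>k. 0 \<le> f k"
    and "\<And>\<eta>. \<eta> > 0 \<Longrightarrow> \<exists>g. g \<longlonglongrightarrow> 0 \<and> (\<forall>k. f k \<le> g k + \<eta>)"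
  shows "f \<longlonglongrightarrow> 0"
proof (rule tendstoI)
  fix \<epsilon> :: real assume "\<epsilon> > 0"
  then obtain g where g: "g \<longlonglongrightarrow> 0" "\<And>k. f k \<le> g k + \<epsilon> / 2"
    using assms(2)[of "\<epsilon> / 2"] by auto
  have "eventually (\<lambda>k. g k < \<epsilon> / 2) sequentially"
    using g(1) \<open>\<epsilon> > 0\<close> by (intro order_tendstoD) auto
  then show "eventually (\<lambda>k. dist (f k) 0 < \<epsilon>) sequentially"
  proof eventually_elim
    case (elim k)
    then show ?case using assms(1)[of k] g(2)[of k] by (simp add: dist_real_def)
  qed
qed

lemma LIMSEQ_zero_by_subseq:
  fixes f :: "nat \<Rightarrow> real"
  assumes "\<And>k. 0 \<le> f k"
    and "\<And>\<epsilon> (s :: nat \<Rightarrow> nat). \<epsilon> > 0 \<Longrightarrow> strict_mono s \<Longrightarrow> (\<And>j. \<epsilon> \<le> f (s j)) \<Longrightarrow> False"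
  shows "f \<longlonglongrightarrow> 0"
proof (rule tendstoI)
  fix \<epsilon> :: real assume "\<epsilon> > 0"
  show "eventually (\<lambda>k. dist (f k) 0 < \<epsilon>) sequentially"
  proof (rule ccontr)
    assume "\<not> eventually (\<lambda>k. dist (f k) 0 < \<epsilon>) sequentially"
    then have "infinite {k. \<not> dist (f k) 0 < \<epsilon>}"
      unfolding cofinite_eq_sequentially[symmetric] eventually_cofinite by simp
    then obtain s :: "nat \<Rightarrow> nat" where s: "strict_mono s" "\<And>j. s j \<in> {k. \<not> dist (f k) 0 < \<epsilon>}"
      using infinite_enumerate by blast
    have "\<epsilon> \<le> f (s j)" for j using s(2)[of j] assms(1)[of "s j"] by (simp add: dist_real_def)
    then show False by (rule assms(2)[OF \<open>\<epsilon> > 0\<close> s(1)])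
  qed
qed

lemma le_of_square_le_mult: "(S::real) \<ge> 0 \<Longrightarrow> K \<ge> 0 \<Longrightarrow> S\<^sup>2 \<le> K * S \<Longrightarrow> S \<le> K"
  by (cases "S = 0") (auto simp: power2_eq_square)

lemma norm_infsum_le_finite_sums:
  fixes f :: "'a \<Rightarrow> 'b::real_normed_vector"
  assumes "f summable_on A" "\<And>H. finite H \<Longrightarrow> H \<subseteq> A \<Longrightarrow> norm (sum f H) \<le> B"
  shows "norm (infsum f A) \<le> B"
proof (rule tendsto_upperbound)
  show "((\<lambda>H. norm (sum f H)) \<longlongrightarrow> norm (infsum f A)) (finite_subsets_at_top A)"
    by (intro tendsto_norm infsum_tendsto assms(1))
  show "eventually (\<lambda>H. norm (sum f H) \<le> B) (finite_subsets_at_top A)"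
    using assms(2) by (rule eventually_finite_subsets_at_top_weakI)
qed simp

section \<open>The sequence space \<open>\<ell>\<^sup>2\<close>\<close>

abbreviation l2norm_on :: "(nat \<Rightarrow> complex) \<Rightarrow> nat set \<Rightarrow> real" where
  "l2norm_on a F \<equiv> L2_set (\<lambda>n. cmod (a n)) F"

lemma l2norm_on_square: "(l2norm_on a F)\<^sup>2 = (\<Sum>n\<in>F. (cmod (a n))\<^sup>2)"
  unfolding L2_set_def by (simp add: sum_nonneg)

lemma l2_by_partial_bound:
  assumes "\<And>F. finite F \<Longrightarrow> F \<subseteq> {1..} \<Longrightarrow> l2norm_on a F \<le> B"
  shows "a \<in> l2" "l2norm a \<le> B"
proof -
  have B: "0 \<le> B" using assms[of "{}"] by simp
  have sums: "(\<Sum>n\<in>F. (cmod (a n))\<^sup>2) \<le> B\<^sup>2" if "finite F" "F \<subseteq> {1..}" for F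
    using power_mono[OF assms[OF that] L2_set_nonneg, of 2] by (simp add: l2norm_on_square)
  have summable: "(\<lambda>n. (cmod (a n))\<^sup>2) summable_on {1..}"
    by (rule nonneg_bdd_above_summable_on) (auto intro!: bdd_aboveI2[where M="B\<^sup>2"] sums)
  then show "a \<in> l2" by (simp add: l2_def)
  have "(\<Sum>\<^sub>\<infinity>n\<in>{1..}. (cmod (a n))\<^sup>2) \<le> B\<^sup>2"
    by (rule infsum_le_finite_sums[OF summable]) (use sums in auto)
  then have "l2norm a \<le> sqrt (B\<^sup>2)" unfolding l2norm_def by (rule real_sqrt_le_mono)
  with B show "l2norm a \<le> B" by simp
qed

lemma l2norm_on_le_l2norm:
  assumes "a \<in> l2" "finite F" "F \<subseteq> {1..}"
  shows "l2norm_on a F \<le> l2norm a"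
proof -
  have "(\<Sum>n\<in>F. (cmod (a n))\<^sup>2) \<le> (\<Sum>\<^sub>\<infinity>n\<in>{1..}. (cmod (a n))\<^sup>2)"
    by (rule finite_sum_le_infsum) (use assms in \<open>auto simp: l2_def\<close>)
  then show ?thesis unfolding L2_set_def l2norm_def by (rule real_sqrt_le_mono)
qed

lemma l2norm_nonneg: "0 \<le> l2norm a"
  unfolding l2norm_def by (simp add: infsum_nonneg)

lemma l2norm_cong: "(\<And>n. n \<ge> 1 \<Longrightarrow> a n = b n) \<Longrightarrow> l2norm a = l2norm b"
  unfolding l2norm_def by (intro arg_cong[where f=sqrt] infsum_cong) auto

lemma l2_cong: "(\<And>n. n \<ge> 1 \<Longrightarrow> a n = b n) \<Longrightarrow> a \<in> l2 \<Longrightarrow> b \<in> l2"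
  unfolding l2_def by (auto intro: summable_on_cong[THEN iffD1, rotated])

lemma norm_le_l2norm:
  assumes "a \<in> l2" "m \<ge> 1"
  shows "cmod (a m) \<le> l2norm a"
  using l2norm_on_le_l2norm[OF assms(1), of "{m}"] assms(2) by simp

lemma zero_in_l2: "(\<lambda>n. 0) \<in> l2" and l2norm_zero: "l2norm (\<lambda>n. 0) = 0"
proof -
  have bound: "l2norm_on (\<lambda>n. 0) F \<le> 0" for F by (simp add: L2_set_0')
  show "(\<lambda>n. 0) \<in> l2" by (rule l2_by_partial_bound(1)[OF bound])
  show "l2norm (\<lambda>n. 0) = 0"
    using l2_by_partial_bound(2)[OF bound] l2norm_nonneg[of "\<lambda>n. 0"] by linarith
qed

lemma l2_triangle:
  assumes "a \<in> l2" "b \<in> l2" "\<And>n. n \<ge> 1 \<Longrightarrow> cmod (c n) \<le> cmod (a n) + cmod (b n)"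
  shows "c \<in> l2" "l2norm c \<le> l2norm a + l2norm b"
proof -
  have bound: "l2norm_on c F \<le> l2norm a + l2norm b" if "finite F" "F \<subseteq> {1..}" for F
  proof -
    have "l2norm_on c F \<le> L2_set (\<lambda>n. cmod (a n) + cmod (b n)) F"
      by (rule L2_set_mono) (use assms(3) that in auto)
    also have "\<dots> \<le> l2norm_on a F + l2norm_on b F" by (rule L2_set_triangle_ineq)
    also have "\<dots> \<le> l2norm a + l2norm b"
      using assms that by (intro add_mono l2norm_on_le_l2norm)
    finally show ?thesis .
  qed
  show "c \<in> l2" "l2norm c \<le> l2norm a + l2norm b"
    by (rule l2_by_partial_bound[OF bound]; assumption)+
qed

lemma l2_add:
  assumes "a \<in> l2" "b \<in> l2"
  shows "(\<lambda>n. a n + b n) \<in> l2" "l2norm (\<lambda>n. a n + b n) \<le> l2norm a + l2norm b"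
  by (rule l2_triangle[OF assms]; simp add: norm_triangle_ineq)+

lemma l2_diff:
  assumes "a \<in> l2" "b \<in> l2"
  shows "(\<lambda>n. a n - b n) \<in> l2" "l2norm (\<lambda>n. a n - b n) \<le> l2norm a + l2norm b"
  by (rule l2_triangle[OF assms]; simp add: norm_triangle_ineq4)+

lemma l2_dominated:
  assumes "a \<in> l2" "0 \<le> c" "\<And>n. n \<ge> 1 \<Longrightarrow> cmod (b n) \<le> c * cmod (a n)"
  shows "b \<in> l2" "l2norm b \<le> c * l2norm a"
proof -
  have bound: "l2norm_on b F \<le> c * l2norm a" if "finite F" "F \<subseteq> {1..}" for F
  proof -
    have "l2norm_on b F \<le> L2_set (\<lambda>n. c * cmod (a n)) F"
      by (rule L2_set_mono) (use assms that in auto)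
    also have "\<dots> = c * l2norm_on a F" using assms(2) by (simp add: L2_set_right_distrib)
    also have "\<dots> \<le> c * l2norm a"
      using assms that by (intro mult_left_mono l2norm_on_le_l2norm)
    finally show ?thesis .
  qed
  show "b \<in> l2" "l2norm b \<le> c * l2norm a"
    by (rule l2_by_partial_bound[OF bound]; assumption)+
qed

lemma l2norm_scale: "l2norm (\<lambda>n. of_real c * a n) = \<bar>c\<bar> * l2norm a"
proof -
  have "(\<Sum>\<^sub>\<infinity>n\<in>{1..}. (cmod (of_real c * a n))\<^sup>2) = (\<Sum>\<^sub>\<infinity>n\<in>{1..}. c\<^sup>2 * (cmod (a n))\<^sup>2)"
    by (simp add: norm_mult power_mult_distrib)
  also have "\<dots> = c\<^sup>2 * (\<Sum>\<^sub>\<infinity>n\<in>{1..}. (cmod (a n))\<^sup>2)"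
    by (rule infsum_cmult_right')
  finally show ?thesis unfolding l2norm_def by (simp add: real_sqrt_mult)
qed

lemma l2norm_restrict_le:
  assumes "finite G"
  shows "(\<lambda>n. if n \<in> G then a n else 0) \<in> l2"
    "l2norm (\<lambda>n. if n \<in> G then a n else 0) \<le> l2norm_on a G"
proof -
  have bound: "l2norm_on (\<lambda>n. if n \<in> G then a n else 0) F \<le> l2norm_on a G" if "finite F" for F
  proof -
    have "l2norm_on (\<lambda>n. if n \<in> G then a n else 0) F = l2norm_on a (F \<inter> G)"
      unfolding L2_set_def using that
      by (intro arg_cong[where f=sqrt] sum.mono_neutral_cong_right) auto
    also have "\<dots> \<le> l2norm_on a G"
      unfolding L2_set_def using assms by (intro real_sqrt_le_mono sum_mono2) auto
    finally show ?thesis .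
  qed
  show "(\<lambda>n. if n \<in> G then a n else 0) \<in> l2"
    "l2norm (\<lambda>n. if n \<in> G then a n else 0) \<le> l2norm_on a G"
    by (rule l2_by_partial_bound[OF bound]; assumption)+
qed

lemma l2norm_on_split_le:
  assumes "finite H" "l2norm_on a (H \<inter> G) \<le> A" "l2norm_on a (H - G) \<le> B"
  shows "l2norm_on a H \<le> A + B"
proof -
  have A: "0 \<le> A" using assms(2) L2_set_nonneg[of "\<lambda>n. cmod (a n)" "H \<inter> G"] by linarith
  have B: "0 \<le> B" using assms(3) L2_set_nonneg[of "\<lambda>n. cmod (a n)" "H - G"] by linarith
  have "(l2norm_on a H)\<^sup>2 = (l2norm_on a (H \<inter> G))\<^sup>2 + (l2norm_on a (H - G))\<^sup>2"
    unfolding l2norm_on_square using assms(1) by (rule sum.Int_Diff)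
  also have "\<dots> \<le> A\<^sup>2 + B\<^sup>2"
    using assms(2,3) by (intro add_mono power_mono) simp_all
  also have "\<dots> \<le> (A + B)\<^sup>2" using A B by (simp add: power2_sum)
  finally show ?thesis by (rule power2_le_imp_le) (use A B in simp)
qed

lemma l2_tail_small:
  assumes "a \<in> l2" "\<epsilon> > 0"
  obtains G where "finite G" "G \<subseteq> {1..}"
    "\<And>H. finite H \<Longrightarrow> H \<subseteq> {1..} \<Longrightarrow> H \<inter> G = {} \<Longrightarrow> l2norm_on a H \<le> \<epsilon>"
proof -
  let ?f = "\<lambda>n. (cmod (a n))\<^sup>2"
  have summable: "?f summable_on {1..}" using assms(1) by (simp add: l2_def)
  obtain G where G: "finite G" "G \<subseteq> {1..}" "dist (sum ?f G) (infsum ?f {1..}) \<le> \<epsilon>\<^sup>2"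
    using infsum_finite_approximation[OF summable, of "\<epsilon>\<^sup>2"] assms(2) by auto
  have "l2norm_on a H \<le> \<epsilon>" if H: "finite H" "H \<subseteq> {1..}" "H \<inter> G = {}" for H
  proof -
    have "sum ?f G + sum ?f H = sum ?f (G \<union> H)"
      using G H by (intro sum.union_disjoint[symmetric]) auto
    also have "\<dots> \<le> infsum ?f {1..}"
      by (rule finite_sum_le_infsum[OF summable]) (use G H in auto)
    finally have "sum ?f H \<le> \<epsilon>\<^sup>2" using G(3) by (simp add: dist_real_def)
    then have "l2norm_on a H \<le> sqrt (\<epsilon>\<^sup>2)" unfolding L2_set_def by (rule real_sqrt_le_mono)
    with assms(2) show ?thesis by simp
  qed
  then show ?thesis by (rule that[OF G(1,2)])
qed

lemma tendsto_l2norm_on: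
  assumes "\<And>n. n \<in> F \<Longrightarrow> (\<lambda>k. a k n) \<longlonglongrightarrow> b n"
  shows "(\<lambda>k. l2norm_on (a k) F) \<longlonglongrightarrow> l2norm_on b F"
  unfolding L2_set_def by (intro tendsto_real_sqrt tendsto_sum tendsto_power tendsto_norm assms)

lemma l2norm_tendsto_zero_if_coordwise:
  assumes u: "\<And>k. u k \<in> l2" and b: "b \<in> l2"
    and lim: "(\<lambda>k. l2norm (u k - b)) \<longlonglongrightarrow> 0"
    and coord: "\<And>m. m \<ge> 1 \<Longrightarrow> (\<lambda>k. u k m) \<longlonglongrightarrow> 0"
  shows "(\<lambda>k. l2norm (u k)) \<longlonglongrightarrow> 0"
proof -
  have "b m = 0" if "m \<ge> 1" for m
  proof -
    have "cmod (u k m - b m) \<le> l2norm (u k - b)" for k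
      using norm_le_l2norm[OF l2_diff(1)[OF u b] that] by (simp add: fun_diff_def)
    then have "(\<lambda>k. u k m - b m) \<longlonglongrightarrow> 0"
      by (intro Lim_null_comparison[OF _ lim] always_eventually allI)
    moreover have "(\<lambda>k. u k m - b m) \<longlonglongrightarrow> 0 - b m" by (intro tendsto_diff coord that tendsto_const)
    ultimately show ?thesis using LIMSEQ_unique by fastforce
  qed
  then have "l2norm (u k - b) = l2norm (u k)" for k by (intro l2norm_cong) simp
  with lim show ?thesis by simp
qed

lemma bounded_seq_pointwise_convergent_subseq:
  fixes x :: "nat \<Rightarrow> nat \<Rightarrow> complex"
  assumes "\<And>k n. cmod (x k n) \<le> B"
  obtains s l where "strict_mono s" "\<And>n. (\<lambda>k. x (s k) n) \<longlonglongrightarrow> l n"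
proof -
  let ?S = "PiE UNIV (\<lambda>_::nat. cball (0::complex) B)"
  have "compactin (product_topology (\<lambda>_. euclidean) UNIV) ?S"
    by (simp add: compactin_PiE)
  then have "compact ?S" by (simp add: euclidean_product_topology compactin_euclidean_iff)
  moreover have "x k \<in> ?S" for k using assms by auto
  ultimately obtain l s where s: "strict_mono s" "(x \<circ> s) \<longlonglongrightarrow> l"
    using compact_imp_seq_compact unfolding seq_compact_def by metis
  have "(\<lambda>k. x (s k) n) \<longlonglongrightarrow> l n" for n
    using continuous_on_tendsto_compose[OF _ s(2), of UNIV "\<lambda>f. f n"] by (simp add: o_def)
  then show ?thesis by (rule that[OF s(1)])
qed

lemma l2_unit_ball_weakly_seq_compact:
  fixes x :: "nat \<Rightarrow> nat \<Rightarrow> complex"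
  assumes x: "\<And>k. x k \<in> l2" "\<And>k. l2norm (x k) \<le> 1"
  obtains s l where "strict_mono s" "l \<in> l2" "l2norm l \<le> 1"
    "\<And>n. n \<ge> 1 \<Longrightarrow> (\<lambda>k. x (s k) n) \<longlonglongrightarrow> l n"
proof -
  define x' where "x' k n = (if n = 0 then 0 else x k n)" for k n
  have "cmod (x' k n) \<le> 1" for k n
    using norm_le_l2norm[OF x(1), of n k] x(2)[of k] by (auto simp: x'_def)
  then obtain s l where s: "strict_mono s" "\<And>n. (\<lambda>k. x' (s k) n) \<longlonglongrightarrow> l n"
    using bounded_seq_pointwise_convergent_subseq[of x' 1] by blast
  have lim: "(\<lambda>k. x (s k) n) \<longlonglongrightarrow> l n" if "n \<ge> 1" for n
    using s(2)[of n] that by (simp add: x'_def)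
  have bound: "l2norm_on l F \<le> 1" if F: "finite F" "F \<subseteq> {1..}" for F
  proof (rule tendsto_upperbound)
    show "(\<lambda>k. l2norm_on (x (s k)) F) \<longlonglongrightarrow> l2norm_on l F"
      using F by (intro tendsto_l2norm_on lim) auto
    show "eventually (\<lambda>k. l2norm_on (x (s k)) F \<le> 1) sequentially"
      using l2norm_on_le_l2norm[OF x(1) F] x(2) by (intro always_eventually allI) (meson order_trans)
  qed simp
  show ?thesis by (rule that[OF s(1) l2_by_partial_bound[OF bound] lim])
qed

section \<open>Operator norms\<close>

lemma op_norm_ge:
  assumes "\<And>a. a \<in> l2 \<Longrightarrow> l2norm a \<le> 1 \<Longrightarrow> l2norm (T a) \<le> E" "a \<in> l2" "l2norm a \<le> 1"
  shows "l2norm (T a) \<le> op_norm T"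
  unfolding op_norm_def using assms by (intro cSup_upper bdd_aboveI) auto

lemma op_norm_nonneg:
  assumes "\<And>a. a \<in> l2 \<Longrightarrow> l2norm a \<le> 1 \<Longrightarrow> l2norm (T a) \<le> E"
  shows "0 \<le> op_norm T"
  using op_norm_ge[OF assms zero_in_l2] l2norm_zero l2norm_nonneg[of "T (\<lambda>n. 0)"] by fastforce

lemma op_norm_less_imp:
  assumes "t < op_norm T"
  obtains a where "a \<in> l2" "l2norm a \<le> 1" "t < l2norm (T a)"
proof -
  have "{l2norm (T a) |a. a \<in> l2 \<and> l2norm a \<le> 1} \<noteq> {}"
    using zero_in_l2 l2norm_zero by fastforce
  from less_cSupD[OF this] assms obtain a where "a \<in> l2" "l2norm a \<le> 1" "t < l2norm (T a)"
    unfolding op_norm_def by blast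
  then show ?thesis by (rule that)
qed

lemma l2norm_le_op_norm:
  assumes bound: "\<And>a. a \<in> l2 \<Longrightarrow> l2norm (T a) \<le> K * l2norm a"
    and homogeneous: "\<And>c a m. m \<ge> 1 \<Longrightarrow> T (\<lambda>n. of_real c * a n) m = of_real c * T a m"
    and a: "a \<in> l2"
  shows "l2norm (T a) \<le> op_norm T * l2norm a"
proof -
  have unit_bound: "l2norm (T b) \<le> \<bar>K\<bar>" if "b \<in> l2" "l2norm b \<le> 1" for b
  proof -
    have "K * l2norm b \<le> \<bar>K\<bar> * l2norm b" by (intro mult_right_mono l2norm_nonneg) simp
    also have "\<dots> \<le> \<bar>K\<bar>" using that(2) l2norm_nonneg[of b] by (simp add: mult_left_le)
    finally show ?thesis using bound[OF that(1)] by linarith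
  qed
  show ?thesis
  proof (cases "l2norm a = 0")
    case True
    then show ?thesis using bound[OF a] by simp
  next
    case False
    define c where "c = 1 / l2norm a"
    have c: "0 < c" using False l2norm_nonneg[of a] unfolding c_def by simp
    have "(\<lambda>n. of_real c * a n) \<in> l2"
      using c by (intro l2_dominated(1)[OF a, of c]) (simp_all add: norm_mult)
    moreover have "l2norm (\<lambda>n. of_real c * a n) = 1"
      using False c l2norm_nonneg[of a] by (simp only: l2norm_scale) (simp add: c_def)
    ultimately have "l2norm (T (\<lambda>n. of_real c * a n)) \<le> op_norm T"
      by (intro op_norm_ge[OF unit_bound]) auto
    moreover have "l2norm (T (\<lambda>n. of_real c * a n)) = c * l2norm (T a)"
      using c by (simp only: l2norm_cong[OF homogeneous] l2norm_scale)
    ultimately have "l2norm (T a) / l2norm a \<le> op_norm T" by (simp add: c_def)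
    then show ?thesis using False l2norm_nonneg[of a] by (simp add: divide_le_eq)
  qed
qed

section \<open>The weight and the operators \<open>D\<^sub>r\<close>\<close>

lemma weight_eq_sum_superset:
  assumes "finite U" "prime_factors n \<subseteq> U" "\<And>p. p \<in> U \<Longrightarrow> prime p" "n \<noteq> 0"
  shows "weight n = (\<Sum>p\<in>U. prime_index p * multiplicity p n)"
  unfolding weight_def
proof (rule sum.mono_neutral_left[OF assms(1,2)])
  show "\<forall>p\<in>U - prime_factors n. prime_index p * multiplicity p n = 0"
    using assms(3,4) by (auto simp: in_prime_factors_iff not_dvd_imp_multiplicity_0)
qed

lemma weight_mult:
  assumes "n \<noteq> 0" "m \<noteq> 0"
  shows "weight (n * m) = weight n + weight m"
proof -
  let ?U = "prime_factors n \<union> prime_factors m"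
  have U: "finite ?U" "\<And>p. p \<in> ?U \<Longrightarrow> prime p" by auto
  have "weight (n * m) = (\<Sum>p\<in>?U. prime_index p * multiplicity p (n * m))"
    using assms by (intro weight_eq_sum_superset U) (auto simp: prime_factors_product)
  also have "\<dots> = (\<Sum>p\<in>?U. prime_index p * multiplicity p n + prime_index p * multiplicity p m)"
    using assms U(2) by (intro sum.cong refl)
      (simp add: prime_elem_multiplicity_mult_distrib distrib_left)
  also have "\<dots> = weight n + weight m"
    using assms weight_eq_sum_superset[OF U(1) _ U(2), of n] weight_eq_sum_superset[OF U(1) _ U(2), of m]
    by (simp add: sum.distrib)
  finally show ?thesis .
qed

lemma prime_index_pos:
  assumes "prime p"
  shows "prime_index p \<ge> 1"
proof -
  have "p \<in> {q. prime q \<and> q \<le> p}" "finite {q. prime q \<and> q \<le> p}" using assms by simp_all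
  then have "card {q. prime q \<and> q \<le> p} > 0" by (metis card_gt_0_iff empty_iff)
  then show ?thesis unfolding prime_index_def by simp
qed

lemma prime_index_less:
  assumes "prime p" "prime q" "p < q"
  shows "prime_index p < prime_index q"
  unfolding prime_index_def
proof (rule psubset_card_mono)
  have "q \<in> {r. prime r \<and> r \<le> q} - {r. prime r \<and> r \<le> p}" using assms by auto
  moreover have "{r. prime r \<and> r \<le> p} \<subseteq> {r. prime r \<and> r \<le> q}" using assms by auto
  ultimately show "{r. prime r \<and> r \<le> p} \<subset> {r. prime r \<and> r \<le> q}" by blast
qed simp

lemma inj_on_prime_index: "inj_on prime_index {p. prime p}"
proof (rule inj_onI)
  fix p q assume "p \<in> {p. prime p}" "q \<in> {p. prime p}" "prime_index p = prime_index q"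
  then show "p = q" using prime_index_less[of p q] prime_index_less[of q p]
    by (metis linorder_neqE_nat mem_Collect_eq order_less_irrefl)
qed

lemma finite_weight_le: "finite {n. n \<ge> 1 \<and> weight n \<le> K}"
proof -
  define Q where "Q = {p. prime p \<and> prime_index p \<le> K}"
  have "finite Q"
    by (rule inj_on_finite[of prime_index _ "{..K}"])
      (auto simp: Q_def intro: inj_on_subset[OF inj_on_prime_index])
  have factor_le: "prime_index p \<le> K \<and> multiplicity p n \<le> K"
    if n: "n \<ge> 1" "weight n \<le> K" and p: "p \<in> prime_factors n" for n p
  proof -
    have "prime_index p * multiplicity p n \<le> weight n"
      unfolding weight_def by (rule member_le_sum) (use p in auto)
    moreover have "multiplicity p n \<ge> 1" "prime_index p \<ge> 1"
      using p n prime_multiplicity_gt_zero_iff[of p n] prime_index_pos[of p]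
      by (auto simp: in_prime_factors_iff)
    then have "prime_index p \<le> prime_index p * multiplicity p n"
      "multiplicity p n \<le> prime_index p * multiplicity p n" by simp_all
    ultimately show ?thesis using n(2) by linarith
  qed
  have "n \<le> (\<Prod>p\<in>Q. p ^ K)" if n: "n \<ge> 1" "weight n \<le> K" for n
  proof -
    have "n = (\<Prod>p\<in>prime_factors n. p ^ multiplicity p n)"
      using n(1) by (intro prime_factorization_nat) simp
    also have "\<dots> \<le> (\<Prod>p\<in>prime_factors n. p ^ K)"
      using factor_le[OF n] by (intro prod_mono) (auto intro!: power_increasing prime_ge_1_nat)
    also have "\<dots> \<le> (\<Prod>p\<in>Q. p ^ K)"
    proof -
      have "prime_factors n \<subseteq> Q" using factor_le[OF n] by (auto simp: Q_def)
      then have "(\<Prod>p\<in>Q. p ^ K) = (\<Prod>p\<in>Q - prime_factors n. p ^ K) * (\<Prod>p\<in>prime_factors n. p ^ K)"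
        using \<open>finite Q\<close> by (rule prod.subset_diff)
      moreover have "1 \<le> (\<Prod>p\<in>Q - prime_factors n. p ^ K)"
        by (intro prod_ge_1) (simp add: Q_def Suc_le_eq prime_gt_0_nat)
      ultimately show ?thesis using mult_le_mono1[of 1 _ "\<Prod>p\<in>prime_factors n. p ^ K"] by simp
    qed
    finally show ?thesis .
  qed
  then show ?thesis by (intro finite_subset[OF _ finite_atMost]) auto
qed

lemma Dr_apply: "Dr r a n = of_real (r ^ weight n) * a n"
  by (simp add: Dr_def)

lemma norm_Dr: "0 \<le> r \<Longrightarrow> cmod (Dr r a n) = r ^ weight n * cmod (a n)"
  unfolding Dr_def by (simp add: norm_mult norm_power)

lemma norm_Dr_le: "0 \<le> r \<Longrightarrow> r \<le> 1 \<Longrightarrow> cmod (Dr r a n) \<le> cmod (a n)"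
  by (simp add: norm_Dr mult_left_le_one_le power_le_one)

lemma norm_Dr_minus_le: "0 \<le> r \<Longrightarrow> r \<le> 1 \<Longrightarrow> cmod (Dr r a n - a n) \<le> cmod (a n)"
proof -
  assume r: "0 \<le> r" "r \<le> 1"
  have "Dr r a n - a n = of_real (r ^ weight n - 1) * a n"
    unfolding Dr_def by (simp add: algebra_simps)
  then have "cmod (Dr r a n - a n) = \<bar>r ^ weight n - 1\<bar> * cmod (a n)"
    by (simp only: norm_mult norm_of_real)
  moreover have "\<bar>r ^ weight n - 1\<bar> \<le> 1" using r by (simp add: power_le_one)
  ultimately show ?thesis by (simp add: mult_left_le_one_le)
qed

lemma Dr_l2:
  assumes "a \<in> l2" "0 \<le> r" "r \<le> 1"
  shows "Dr r a \<in> l2" "l2norm (Dr r a) \<le> l2norm a"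
  using l2_dominated[OF assms(1), of 1 "Dr r a"] norm_Dr_le[OF assms(2,3)] by auto

lemma Dr_minus_l2:
  assumes "a \<in> l2" "0 \<le> r" "r \<le> 1"
  shows "(\<lambda>n. Dr r a n - a n) \<in> l2" "l2norm (\<lambda>n. Dr r a n - a n) \<le> l2norm a"
  using l2_dominated[OF assms(1), of 1 "\<lambda>n. Dr r a n - a n"] norm_Dr_minus_le[OF assms(2,3)]
  by auto

lemma Dr_tendsto_self:
  assumes v: "v \<in> l2" and \<rho>: "\<And>k. 0 \<le> \<rho> k" "\<And>k. \<rho> k \<le> 1" "\<rho> \<longlonglongrightarrow> 1"
  shows "(\<lambda>k. l2norm (\<lambda>n. Dr (\<rho> k) v n - v n)) \<longlonglongrightarrow> 0"
proof (rule LIMSEQ_zero_by_approx[OF l2norm_nonneg])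
  fix \<eta> :: real assume "\<eta> > 0"
  obtain G where G: "finite G" "G \<subseteq> {1..}"
      "\<And>H. finite H \<Longrightarrow> H \<subseteq> {1..} \<Longrightarrow> H \<inter> G = {} \<Longrightarrow> l2norm_on v H \<le> \<eta>"
    by (rule l2_tail_small[OF v \<open>\<eta> > 0\<close>]) (rule that)
  let ?g = "\<lambda>k. l2norm_on (\<lambda>n. Dr (\<rho> k) v n - v n) G"
  have "?g \<longlonglongrightarrow> l2norm_on (\<lambda>n. 0) G"
  proof (rule tendsto_l2norm_on)
    fix n
    have "(\<lambda>k. Dr (\<rho> k) v n - v n) \<longlonglongrightarrow> of_real (1 ^ weight n) * v n - v n"
      unfolding Dr_def by (intro tendsto_intros \<rho>(3))
    then show "(\<lambda>k. Dr (\<rho> k) v n - v n) \<longlonglongrightarrow> 0" by simp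
  qed
  moreover have "l2norm (\<lambda>n. Dr (\<rho> k) v n - v n) \<le> ?g k + \<eta>" for k
  proof (rule l2_by_partial_bound(2), rule l2norm_on_split_le)
    fix H :: "nat set" assume H: "finite H" "H \<subseteq> {1..}"
    then show "?g k \<ge> l2norm_on (\<lambda>n. Dr (\<rho> k) v n - v n) (H \<inter> G)"
      unfolding L2_set_def using G(1) by (intro real_sqrt_le_mono sum_mono2) auto
    have "l2norm_on (\<lambda>n. Dr (\<rho> k) v n - v n) (H - G) \<le> l2norm_on v (H - G)"
      by (rule L2_set_mono) (simp_all add: norm_Dr_minus_le \<rho>)
    also have "\<dots> \<le> \<eta>" using H by (intro G(3)) auto
    finally show "l2norm_on (\<lambda>n. Dr (\<rho> k) v n - v n) (H - G) \<le> \<eta>" .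
  qed
  ultimately show "\<exists>g. g \<longlonglongrightarrow> 0 \<and> (\<forall>k. l2norm (\<lambda>n. Dr (\<rho> k) v n - v n) \<le> g k + \<eta>)"
    by (auto simp: L2_set_0')
qed

lemma l2norm_Dr_le:
  assumes a: "a \<in> l2" and r: "0 \<le> r" "r \<le> 1"
  shows "l2norm (Dr r a) \<le> l2norm_on a {n. n \<ge> 1 \<and> weight n \<le> K} + r ^ K * l2norm a"
proof (rule l2_by_partial_bound(2), rule l2norm_on_split_le)
  let ?G = "{n. n \<ge> 1 \<and> weight n \<le> K}"
  fix H :: "nat set" assume H: "finite H" "H \<subseteq> {1..}"
  have "l2norm_on (Dr r a) (H \<inter> ?G) \<le> l2norm_on a (H \<inter> ?G)"
    by (rule L2_set_mono) (simp_all add: norm_Dr_le r)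
  also have "\<dots> \<le> l2norm_on a ?G"
    unfolding L2_set_def using finite_weight_le by (intro real_sqrt_le_mono sum_mono2) auto
  finally show "l2norm_on (Dr r a) (H \<inter> ?G) \<le> l2norm_on a ?G" .
  have "l2norm_on (Dr r a) (H - ?G) \<le> L2_set (\<lambda>n. r ^ K * cmod (a n)) (H - ?G)"
  proof (rule L2_set_mono)
    fix n assume "n \<in> H - ?G"
    then have "r ^ weight n \<le> r ^ K" using H r by (intro power_decreasing) auto
    then show "cmod (Dr r a n) \<le> r ^ K * cmod (a n)" using r by (simp add: norm_Dr mult_right_mono)
  qed simp
  also have "\<dots> = r ^ K * l2norm_on a (H - ?G)" using r by (simp add: L2_set_right_distrib)
  also have "\<dots> \<le> r ^ K * l2norm a"
    using H r by (intro mult_left_mono l2norm_on_le_l2norm a) auto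
  finally show "l2norm_on (Dr r a) (H - ?G) \<le> r ^ K * l2norm a" .
qed

lemma Dr_tendsto_zero:
  fixes z :: "nat \<Rightarrow> nat \<Rightarrow> complex"
  assumes r: "0 \<le> r" "r < 1" and z: "\<And>k. z k \<in> l2" "\<And>k. l2norm (z k) \<le> B"
    and null: "\<And>n. n \<ge> 1 \<Longrightarrow> (\<lambda>k. z k n) \<longlonglongrightarrow> 0"
  shows "(\<lambda>k. l2norm (Dr r (z k))) \<longlonglongrightarrow> 0"
proof (rule LIMSEQ_zero_by_approx[OF l2norm_nonneg])
  fix \<eta> :: real assume "\<eta> > 0"
  have B: "0 \<le> B" using z(2)[of 0] l2norm_nonneg[of "z 0"] by linarith
  have "(\<lambda>K. r ^ K) \<longlonglongrightarrow> 0" using r by (intro LIMSEQ_power_zero) simp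
  then obtain K where K: "r ^ K < \<eta> / (B + 1)"
    using \<open>\<eta> > 0\<close> B order_tendstoD(2)[of _ 0 sequentially "\<eta> / (B + 1)"]
    by (auto simp: eventually_sequentially)
  have small: "r ^ K * l2norm (z k) \<le> \<eta>" for k
  proof -
    have "r ^ K * l2norm (z k) \<le> r ^ K * (B + 1)"
      using r z(2)[of k] by (intro mult_left_mono) simp_all
    with K B show ?thesis by (simp add: pos_less_divide_eq)
  qed
  have "l2norm (Dr r (z k)) \<le> l2norm_on (z k) {n. n \<ge> 1 \<and> weight n \<le> K} + \<eta>" for k
    using l2norm_Dr_le[OF z(1)[of k] r(1) less_imp_le[OF r(2)], of K] small[of k] by linarith
  moreover have "(\<lambda>k. l2norm_on (z k) {n. n \<ge> 1 \<and> weight n \<le> K}) \<longlonglongrightarrow> l2norm_on (\<lambda>n. 0) {n. n \<ge> 1 \<and> weight n \<le> K}"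
    by (rule tendsto_l2norm_on) (auto intro: null)
  ultimately show "\<exists>g. g \<longlonglongrightarrow> 0 \<and> (\<forall>k. l2norm (Dr r (z k)) \<le> g k + \<eta>)"
    by (auto simp: L2_set_0')
qed

section \<open>Multiplicative Hankel operators\<close>

lemma MH_scale: "MH \<beta> (\<lambda>n. c * a n) m = c * MH \<beta> a m"
  unfolding MH_def by (simp add: mult.left_commute infsum_cmult_right')

lemma MH_Dr:
  assumes "m \<ge> 1"
  shows "MH (Dr r \<beta>) a m = Dr r (MH \<beta> (Dr r a)) m"
proof -
  have "MH (Dr r \<beta>) a m = (\<Sum>\<^sub>\<infinity>n\<in>{1..}. of_real (r ^ weight m) * (\<beta> (n * m) * Dr r a n))"
    unfolding MH_def
  proof (rule infsum_cong)
    fix n :: nat assume "n \<in> {1..}"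
    then have "r ^ weight (n * m) = r ^ weight m * r ^ weight n"
      using assms by (simp add: weight_mult power_add mult.commute)
    then show "Dr r \<beta> (n * m) * a n = of_real (r ^ weight m) * (\<beta> (n * m) * Dr r a n)"
      unfolding Dr_def by (simp add: mult_ac)
  qed
  also have "\<dots> = Dr r (MH \<beta> (Dr r a)) m"
    unfolding Dr_def MH_def by (rule infsum_cmult_right')
  finally show ?thesis .
qed

lemma MH_form_eq_sum:
  assumes "finite G" "finite F" "G \<subseteq> {1..}" "F \<subseteq> {1..}"
    "\<And>n. n \<ge> 1 \<Longrightarrow> a n \<noteq> 0 \<Longrightarrow> n \<in> G" "\<And>m. m \<ge> 1 \<Longrightarrow> b m \<noteq> 0 \<Longrightarrow> m \<in> F"
  shows "MH_form \<alpha> a b = (\<Sum>n\<in>G. \<Sum>m\<in>F. a n * cnj (b m) * \<alpha> (n * m))"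
proof -
  have "MH_form \<alpha> a b = (\<Sum>n\<in>{n\<in>{1..}. a n \<noteq> 0}. \<Sum>m\<in>F. a n * cnj (b m) * \<alpha> (n * m))"
    unfolding MH_form_def
    by (intro sum.cong refl sum.mono_neutral_left[OF assms(2)]) (use assms(4,6) in auto)
  also have "\<dots> = (\<Sum>n\<in>G. \<Sum>m\<in>F. a n * cnj (b m) * \<alpha> (n * m))"
    by (rule sum.mono_neutral_left[OF assms(1)]) (use assms(3,5) in auto)
  finally show ?thesis .
qed

lemma fin_supp_if_in: "finite G \<Longrightarrow> fin_supp (\<lambda>n. if n \<in> G then a n else 0)"
  unfolding fin_supp_def by (rule finite_subset[of _ G]) auto

lemma sum_cnj_mult_self: "(\<Sum>m\<in>F. cnj (y m) * y m) = of_real ((l2norm_on y F)\<^sup>2)"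
proof -
  have "(\<Sum>m\<in>F. cnj (y m) * y m) = (\<Sum>m\<in>F. of_real ((cmod (y m))\<^sup>2))"
    by (rule sum.cong) (simp, metis complex_norm_square mult.commute)
  then show ?thesis by (simp add: l2norm_on_square)
qed

locale MH_bounded_by =
  fixes \<alpha> :: "nat \<Rightarrow> complex" and C :: real
  assumes C_nonneg: "0 \<le> C"
    and form_bound: "\<And>a b. fin_supp a \<Longrightarrow> fin_supp b \<Longrightarrow> cmod (MH_form \<alpha> a b) \<le> C * l2norm a * l2norm b"
begin

text \<open>Testing the form against the truncated image itself turns the bound on the form into
  \<open>S\<^sup>2 \<le> C \<parallel>x\<parallel> S\<close> for the norm \<open>S\<close> of the truncated image.\<close>

lemma truncated_MH_bound:
  assumes G: "finite G" "G \<subseteq> {1..}" and F: "finite F" "F \<subseteq> {1..}"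
  shows "l2norm_on (\<lambda>m. \<Sum>n\<in>G. \<alpha> (n * m) * x n) F \<le> C * l2norm_on x G"
proof -
  define y where "y m = (\<Sum>n\<in>G. \<alpha> (n * m) * x n)" for m
  define S where "S = l2norm_on y F"
  define a where "a = (\<lambda>n. if n \<in> G then x n else 0)"
  define b where "b = (\<lambda>m. if m \<in> F then y m else 0)"
  have "MH_form \<alpha> a b = (\<Sum>n\<in>G. \<Sum>m\<in>F. a n * cnj (b m) * \<alpha> (n * m))"
    using G F by (intro MH_form_eq_sum) (auto simp: a_def b_def split: if_splits)
  also have "\<dots> = (\<Sum>m\<in>F. \<Sum>n\<in>G. cnj (y m) * (\<alpha> (n * m) * x n))"
    by (subst sum.swap) (simp add: a_def b_def mult_ac)
  also have "\<dots> = (\<Sum>m\<in>F. cnj (y m) * y m)" by (simp add: y_def sum_distrib_left)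
  also have "\<dots> = of_real (S\<^sup>2)" unfolding S_def by (rule sum_cnj_mult_self)
  finally have "S\<^sup>2 = cmod (MH_form \<alpha> a b)" by (simp add: norm_power)
  also have "\<dots> \<le> C * l2norm a * l2norm b"
    using G(1) F(1) unfolding a_def b_def by (intro form_bound fin_supp_if_in)
  also have "\<dots> \<le> C * l2norm_on x G * S"
    using l2norm_restrict_le(2)[OF G(1), of x] l2norm_restrict_le(2)[OF F(1), of y]
    unfolding a_def b_def S_def
    by (intro mult_mono mult_left_mono C_nonneg mult_nonneg_nonneg l2norm_nonneg L2_set_nonneg)
  finally have "S\<^sup>2 \<le> (C * l2norm_on x G) * S" by simp
  then have "S \<le> C * l2norm_on x G"
    by (rule le_of_square_le_mult[rotated 2]) (simp_all add: S_def C_nonneg)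
  then show ?thesis by (simp add: S_def y_def)
qed

lemma column_l2:
  assumes "m \<ge> 1"
  shows "(\<lambda>n. \<alpha> (n * m)) \<in> l2" "l2norm (\<lambda>n. \<alpha> (n * m)) \<le> C"
proof -
  have bound: "l2norm_on (\<lambda>n. \<alpha> (n * m)) G \<le> C" if "finite G" "G \<subseteq> {1..}" for G
    using truncated_MH_bound[of "{m}" G "\<lambda>_. 1"] assms that by (simp add: mult.commute)
  show "(\<lambda>n. \<alpha> (n * m)) \<in> l2" "l2norm (\<lambda>n. \<alpha> (n * m)) \<le> C"
    by (rule l2_by_partial_bound[OF bound]; assumption)+
qed

lemma row_norm_sum_le:
  assumes x: "x \<in> l2" and m: "m \<ge> 1" and H: "finite H" "H \<subseteq> {1..}"
  shows "(\<Sum>n\<in>H. cmod (\<alpha> (n * m) * x n)) \<le> C * l2norm x"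
proof -
  have "(\<Sum>n\<in>H. cmod (\<alpha> (n * m) * x n)) = (\<Sum>n\<in>H. \<bar>cmod (\<alpha> (n * m))\<bar> * \<bar>cmod (x n)\<bar>)"
    by (simp add: norm_mult)
  also have "\<dots> \<le> l2norm_on (\<lambda>n. \<alpha> (n * m)) H * l2norm_on x H" by (rule L2_set_mult_ineq)
  also have "\<dots> \<le> C * l2norm x"
    using l2norm_on_le_l2norm[OF column_l2(1)[OF m] H] column_l2(2)[OF m]
      l2norm_on_le_l2norm[OF x H] C_nonneg
    by (intro mult_mono) auto
  finally show ?thesis .
qed

lemma row_summable:
  assumes "x \<in> l2" "m \<ge> 1"
  shows "(\<lambda>n. \<alpha> (n * m) * x n) summable_on {1..}"
proof (rule abs_summable_summable)
  show "(\<lambda>n. norm (\<alpha> (n * m) * x n)) summable_on {1..}"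
    unfolding abs_summable_iff_bdd_above
    by (rule bdd_aboveI2[where M="C * l2norm x"]) (use row_norm_sum_le[OF assms] in auto)
qed

lemma MH_l2:
  assumes x: "x \<in> l2"
  shows "MH \<alpha> x \<in> l2" "l2norm (MH \<alpha> x) \<le> C * l2norm x"
proof -
  have bound: "l2norm_on (MH \<alpha> x) F \<le> C * l2norm x" if F: "finite F" "F \<subseteq> {1..}" for F
  proof (rule tendsto_upperbound)
    show "((\<lambda>G. l2norm_on (\<lambda>m. \<Sum>n\<in>G. \<alpha> (n * m) * x n) F) \<longlongrightarrow> l2norm_on (MH \<alpha> x) F)
        (finite_subsets_at_top {1..})"
      unfolding L2_set_def MH_def using F row_summable[OF x]
      by (intro tendsto_intros infsum_tendsto) auto
    show "eventually (\<lambda>G. l2norm_on (\<lambda>m. \<Sum>n\<in>G. \<alpha> (n * m) * x n) F \<le> C * l2norm x)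
        (finite_subsets_at_top {1..})"
    proof (rule eventually_finite_subsets_at_top_weakI)
      fix G :: "nat set" assume G: "finite G" "G \<subseteq> {1..}"
      have "l2norm_on (\<lambda>m. \<Sum>n\<in>G. \<alpha> (n * m) * x n) F \<le> C * l2norm_on x G"
        by (rule truncated_MH_bound[OF G F])
      also have "\<dots> \<le> C * l2norm x" by (intro mult_left_mono l2norm_on_le_l2norm x G C_nonneg)
      finally show "l2norm_on (\<lambda>m. \<Sum>n\<in>G. \<alpha> (n * m) * x n) F \<le> C * l2norm x" .
    qed
  qed simp
  show "MH \<alpha> x \<in> l2" "l2norm (MH \<alpha> x) \<le> C * l2norm x"
    by (rule l2_by_partial_bound[OF bound]; assumption)+
qed

lemma MH_diff:
  assumes "x \<in> l2" "y \<in> l2" "m \<ge> 1"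
  shows "MH \<alpha> (\<lambda>n. x n - y n) m = MH \<alpha> x m - MH \<alpha> y m"
proof -
  have "MH \<alpha> (\<lambda>n. x n - y n) m = (\<Sum>\<^sub>\<infinity>n\<in>{1..}. \<alpha> (n * m) * x n + - (\<alpha> (n * m) * y n))"
    unfolding MH_def by (intro infsum_cong) (simp add: algebra_simps)
  also have "\<dots> = MH \<alpha> x m + (\<Sum>\<^sub>\<infinity>n\<in>{1..}. - (\<alpha> (n * m) * y n))"
    unfolding MH_def using row_summable[OF assms(1,3)] row_summable[OF assms(2,3)]
    by (intro infsum_add) (simp_all add: summable_on_uminus)
  finally show ?thesis by (simp add: infsum_uminus MH_def)
qed

lemma norm_MH_le_head_tail:
  assumes x: "x \<in> l2" and m: "m \<ge> 1" and G: "finite G"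
    and tail: "\<And>H. finite H \<Longrightarrow> H \<subseteq> {1..} \<Longrightarrow> H \<inter> G = {} \<Longrightarrow> l2norm_on (\<lambda>n. \<alpha> (n * m)) H \<le> t"
  shows "cmod (MH \<alpha> x m) \<le> (\<Sum>n\<in>G. cmod (\<alpha> (n * m) * x n)) + t * l2norm x"
  unfolding MH_def
proof (rule norm_infsum_le_finite_sums[OF row_summable[OF x m]])
  fix H :: "nat set" assume H: "finite H" "H \<subseteq> {1..}"
  have HG: "finite (H - G)" "H - G \<subseteq> {1..}" using H by auto
  have "0 \<le> t" using tail[of "{}"] by simp
  have "(\<Sum>n\<in>H - G. cmod (\<alpha> (n * m) * x n)) = (\<Sum>n\<in>H - G. \<bar>cmod (\<alpha> (n * m))\<bar> * \<bar>cmod (x n)\<bar>)"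
    by (simp add: norm_mult)
  also have "\<dots> \<le> l2norm_on (\<lambda>n. \<alpha> (n * m)) (H - G) * l2norm_on x (H - G)"
    by (rule L2_set_mult_ineq)
  also have "\<dots> \<le> t * l2norm x"
    using tail[OF HG] l2norm_on_le_l2norm[OF x HG] \<open>0 \<le> t\<close> by (intro mult_mono) auto
  finally have "(\<Sum>n\<in>H - G. cmod (\<alpha> (n * m) * x n)) \<le> t * l2norm x" .
  moreover have "(\<Sum>n\<in>H \<inter> G. cmod (\<alpha> (n * m) * x n)) \<le> (\<Sum>n\<in>G. cmod (\<alpha> (n * m) * x n))"
    using G by (intro sum_mono2) auto
  moreover have "(\<Sum>n\<in>H. cmod (\<alpha> (n * m) * x n))
      = (\<Sum>n\<in>H \<inter> G. cmod (\<alpha> (n * m) * x n)) + (\<Sum>n\<in>H - G. cmod (\<alpha> (n * m) * x n))"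
    by (rule sum.Int_Diff[OF H(1)])
  moreover have "cmod (\<Sum>n\<in>H. \<alpha> (n * m) * x n) \<le> (\<Sum>n\<in>H. cmod (\<alpha> (n * m) * x n))"
    by (rule norm_sum)
  ultimately show "cmod (\<Sum>n\<in>H. \<alpha> (n * m) * x n) \<le> (\<Sum>n\<in>G. cmod (\<alpha> (n * m) * x n)) + t * l2norm x"
    by linarith
qed

lemma MH_tendsto_zero_coordwise:
  fixes z :: "nat \<Rightarrow> nat \<Rightarrow> complex"
  assumes z: "\<And>k. z k \<in> l2" "\<And>k. l2norm (z k) \<le> B"
    and null: "\<And>n. n \<ge> 1 \<Longrightarrow> (\<lambda>k. z k n) \<longlonglongrightarrow> 0" and m: "m \<ge> 1"
  shows "(\<lambda>k. MH \<alpha> (z k) m) \<longlonglongrightarrow> 0"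
proof (rule tendsto_norm_zero_cancel, rule LIMSEQ_zero_by_approx[OF norm_ge_zero])
  fix \<eta> :: real assume "\<eta> > 0"
  have B: "0 \<le> B" using z(2)[of 0] l2norm_nonneg[of "z 0"] by linarith
  have pos: "\<eta> / (B + 1) > 0" using \<open>\<eta> > 0\<close> B by simp
  obtain G where G: "finite G" "G \<subseteq> {1..}"
      "\<And>H. finite H \<Longrightarrow> H \<subseteq> {1..} \<Longrightarrow> H \<inter> G = {} \<Longrightarrow> l2norm_on (\<lambda>n. \<alpha> (n * m)) H \<le> \<eta> / (B + 1)"
    by (rule l2_tail_small[OF column_l2(1)[OF m] pos]) (rule that)
  have small: "\<eta> / (B + 1) * l2norm (z k) \<le> \<eta>" for k
  proof -
    have "\<eta> / (B + 1) * l2norm (z k) \<le> \<eta> / (B + 1) * B"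
      using pos z(2)[of k] by (intro mult_left_mono) auto
    also have "\<dots> \<le> \<eta>" using \<open>\<eta> > 0\<close> B by (simp add: field_simps)
    finally show ?thesis .
  qed
  have "cmod (MH \<alpha> (z k) m) \<le> (\<Sum>n\<in>G. cmod (\<alpha> (n * m) * z k n)) + \<eta>" for k
    using norm_MH_le_head_tail[OF z(1)[of k] m G(1) G(3)] small[of k] by linarith
  moreover have "(\<lambda>k. \<Sum>n\<in>G. cmod (\<alpha> (n * m) * z k n)) \<longlonglongrightarrow> (\<Sum>n\<in>G. cmod (\<alpha> (n * m) * 0))"
    using G(2) by (intro tendsto_intros null) auto
  ultimately show "\<exists>g. g \<longlonglongrightarrow> 0 \<and> (\<forall>k. cmod (MH \<alpha> (z k) m) \<le> g k + \<eta>)" by auto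
qed

lemma compact_MH_subseq_tendsto_zero:
  assumes compact: "compact_op (MH \<alpha>)"
    and y: "\<And>k. y k \<in> l2" "\<And>k. l2norm (y k) \<le> 1"
    and coord: "\<And>m. m \<ge> 1 \<Longrightarrow> (\<lambda>k. MH \<alpha> (y k) m) \<longlonglongrightarrow> 0"
  obtains s where "strict_mono s" "(\<lambda>k. l2norm (MH \<alpha> (y (s k)))) \<longlonglongrightarrow> 0"
proof -
  have "y k \<in> l2 \<and> l2norm (y k) \<le> 1" for k using y(1)[of k] y(2)[of k] by (rule conjI)
  from compact[unfolded compact_op_def, rule_format, of y, OF this]
  obtain s b where s: "strict_mono s" "b \<in> l2" "(\<lambda>k. l2norm (MH \<alpha> (y (s k)) - b)) \<longlonglongrightarrow> 0"
    by (elim exE conjE) (rule that)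
  have "(\<lambda>k. MH \<alpha> (y (s k)) m) \<longlonglongrightarrow> 0" if "m \<ge> 1" for m
    using LIMSEQ_subseq_LIMSEQ[OF coord[OF that] s(1)] by (simp add: o_def)
  then have "(\<lambda>k. l2norm (MH \<alpha> (y (s k)))) \<longlonglongrightarrow> 0"
    by (rule l2norm_tendsto_zero_if_coordwise[OF MH_l2(1)[OF y(1)] s(2,3)])
  with s(1) show ?thesis by (rule that)
qed

lemma compact_imp_MH_tendsto_zero:
  fixes z :: "nat \<Rightarrow> nat \<Rightarrow> complex"
  assumes compact: "compact_op (MH \<alpha>)"
    and z: "\<And>k. z k \<in> l2" "\<And>k. l2norm (z k) \<le> B"
    and null: "\<And>n. n \<ge> 1 \<Longrightarrow> (\<lambda>k. z k n) \<longlonglongrightarrow> 0"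
  shows "(\<lambda>k. l2norm (MH \<alpha> (z k))) \<longlonglongrightarrow> 0"
proof (rule LIMSEQ_zero_by_subseq[OF l2norm_nonneg])
  fix \<epsilon> :: real and s :: "nat \<Rightarrow> nat"
  assume "\<epsilon> > 0" "strict_mono s" and large: "\<And>j. \<epsilon> \<le> l2norm (MH \<alpha> (z (s j)))"
  have B: "0 \<le> B" using z(2)[of 0] l2norm_nonneg[of "z 0"] by linarith
  define c where "c = 1 / (B + 1)"
  have c: "0 < c" "c * B \<le> 1" using B by (simp_all add: c_def field_simps)
  define y where "y j = (\<lambda>n. of_real c * z (s j) n)" for j
  have y_l2: "y j \<in> l2" for j
    using c by (intro l2_dominated(1)[OF z(1)[of "s j"], of c]) (simp_all add: y_def norm_mult)
  have y_unit: "l2norm (y j) \<le> 1" for j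
  proof -
    have "l2norm (y j) = c * l2norm (z (s j))" using c by (simp add: y_def l2norm_scale)
    then show ?thesis using mult_left_mono[OF z(2)[of "s j"], of c] c by linarith
  qed
  have y_coord: "(\<lambda>k. MH \<alpha> (y k) m) \<longlonglongrightarrow> 0" if "m \<ge> 1" for m
  proof -
    have "(\<lambda>k. z (s k) n) \<longlonglongrightarrow> 0" if "n \<ge> 1" for n
      using LIMSEQ_subseq_LIMSEQ[OF null[OF that] \<open>strict_mono s\<close>] by (simp add: o_def)
    then have "(\<lambda>k. MH \<alpha> (z (s k)) m) \<longlonglongrightarrow> 0"
      by (rule MH_tendsto_zero_coordwise[of "\<lambda>k. z (s k)" B, OF z(1) z(2) _ \<open>m \<ge> 1\<close>])
    from tendsto_mult_right_zero[OF this, of "of_real c"] show ?thesis by (simp add: y_def MH_scale)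
  qed
  obtain s' where "strict_mono s'" and s': "(\<lambda>k. l2norm (MH \<alpha> (y (s' k)))) \<longlonglongrightarrow> 0"
    by (rule compact_MH_subseq_tendsto_zero[OF compact y_l2 y_unit y_coord]) (assumption | rule that)+
  have "l2norm (MH \<alpha> (y j)) = c * l2norm (MH \<alpha> (z (s j)))" for j
  proof -
    have "MH \<alpha> (y j) = (\<lambda>m. of_real c * MH \<alpha> (z (s j)) m)"
      by (simp add: y_def MH_scale fun_eq_iff)
    then show ?thesis using c by (simp add: l2norm_scale)
  qed
  then have "c * \<epsilon> \<le> l2norm (MH \<alpha> (y j))" for j
    using large[of j] c by (simp add: mult_le_cancel_left_pos)
  then have "c * \<epsilon> \<le> 0" by (intro LIMSEQ_le_const[OF s']) blast
  with mult_pos_pos[OF c(1) \<open>\<epsilon> > 0\<close>] show False by linarith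
qed

lemma MH_Dr_minus_l2:
  assumes a: "a \<in> l2" and r: "0 \<le> r" "r \<le> 1"
  shows "MH (Dr r \<alpha>) a - MH \<alpha> a \<in> l2" "l2norm (MH (Dr r \<alpha>) a - MH \<alpha> a) \<le> 2 * C * l2norm a"
proof -
  let ?u = "Dr r (MH \<alpha> (Dr r a))"
  have u: "?u \<in> l2" "l2norm ?u \<le> C * l2norm a"
    using Dr_l2[OF MH_l2(1)[OF Dr_l2(1)[OF a r]] r] MH_l2(2)[OF Dr_l2(1)[OF a r]]
      mult_left_mono[OF Dr_l2(2)[OF a r] C_nonneg] by auto
  have d: "(\<lambda>m. ?u m - MH \<alpha> a m) \<in> l2" "l2norm (\<lambda>m. ?u m - MH \<alpha> a m) \<le> l2norm ?u + l2norm (MH \<alpha> a)"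
    by (rule l2_diff[OF u(1) MH_l2(1)[OF a]])+
  show "MH (Dr r \<alpha>) a - MH \<alpha> a \<in> l2" by (rule l2_cong[OF _ d(1)]) (simp add: MH_Dr)
  have "l2norm (MH (Dr r \<alpha>) a - MH \<alpha> a) = l2norm (\<lambda>m. ?u m - MH \<alpha> a m)"
    by (rule l2norm_cong) (simp add: MH_Dr)
  then show "l2norm (MH (Dr r \<alpha>) a - MH \<alpha> a) \<le> 2 * C * l2norm a"
    using d(2) u(2) MH_l2(2)[OF a] by linarith
qed

lemma MH_Dr_minus_decomposition:
  assumes a: "a \<in> l2" and l: "l \<in> l2" and r: "0 \<le> r" "r \<le> 1" and m: "m \<ge> 1"
  shows "(MH (Dr r \<alpha>) a - MH \<alpha> a) m =
    (Dr r (MH \<alpha> (Dr r (\<lambda>n. a n - l n))) m - MH \<alpha> (\<lambda>n. a n - l n) m)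
    + (Dr r (MH \<alpha> (\<lambda>n. Dr r l n - l n)) m + (Dr r (MH \<alpha> l) m - MH \<alpha> l m))"
proof -
  have "Dr r (\<lambda>n. a n - l n) = (\<lambda>n. Dr r a n - Dr r l n)"
    by (simp add: Dr_def fun_eq_iff right_diff_distrib)
  then have e1: "MH \<alpha> (Dr r (\<lambda>n. a n - l n)) m = MH \<alpha> (Dr r a) m - MH \<alpha> (Dr r l) m"
    using MH_diff[OF Dr_l2(1)[OF a r] Dr_l2(1)[OF l r] m] by simp
  have e2: "MH \<alpha> (\<lambda>n. Dr r l n - l n) m = MH \<alpha> (Dr r l) m - MH \<alpha> l m"
    by (rule MH_diff[OF Dr_l2(1)[OF l r] l m])
  have e3: "MH \<alpha> (\<lambda>n. a n - l n) m = MH \<alpha> a m - MH \<alpha> l m"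
    by (rule MH_diff[OF a l m])
  have "(MH (Dr r \<alpha>) a - MH \<alpha> a) m = of_real (r ^ weight m) * MH \<alpha> (Dr r a) m - MH \<alpha> a m"
    using m by (simp add: MH_Dr Dr_apply)
  then show ?thesis unfolding Dr_apply[of r "MH \<alpha> _" m] e1 e2 e3 by (simp add: algebra_simps)
qed

lemma l2norm_MH_Dr_minus_le_op_norm:
  assumes a: "a \<in> l2" and r: "0 \<le> r" "r \<le> 1"
  shows "l2norm (MH (Dr r \<alpha>) a - MH \<alpha> a) \<le> op_norm (\<lambda>a. MH (Dr r \<alpha>) a - MH \<alpha> a) * l2norm a"
proof (rule l2norm_le_op_norm[OF _ _ a])
  show "l2norm (MH (Dr r \<alpha>) b - MH \<alpha> b) \<le> 2 * C * l2norm b" if "b \<in> l2" for b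
    by (rule MH_Dr_minus_l2(2)[OF that r])
  show "(MH (Dr r \<alpha>) (\<lambda>n. of_real c * b n) - MH \<alpha> (\<lambda>n. of_real c * b n)) m
      = of_real c * (MH (Dr r \<alpha>) b - MH \<alpha> b) m" for c b m
    by (simp add: MH_scale right_diff_distrib)
qed

lemma op_norm_MH_Dr_minus_nonneg:
  assumes "0 \<le> r" "r \<le> 1"
  shows "0 \<le> op_norm (\<lambda>a. MH (Dr r \<alpha>) a - MH \<alpha> a)"
proof (rule op_norm_nonneg)
  fix a assume "a \<in> l2" "l2norm a \<le> 1"
  then show "l2norm (MH (Dr r \<alpha>) a - MH \<alpha> a) \<le> 2 * C"
    using MH_Dr_minus_l2(2)[OF _ assms, of a] C_nonneg mult_left_mono[of "l2norm a" 1 "2 * C"]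
    by simp
qed

lemma MH_Dr_minus_norm_le:
  assumes a: "a \<in> l2" and l: "l \<in> l2" and r: "0 \<le> r" "r \<le> 1"
  shows "l2norm (MH (Dr r \<alpha>) a - MH \<alpha> a)
    \<le> l2norm (MH \<alpha> (Dr r (\<lambda>n. a n - l n))) + l2norm (MH \<alpha> (\<lambda>n. a n - l n))
      + C * l2norm (\<lambda>n. Dr r l n - l n) + l2norm (\<lambda>n. Dr r (MH \<alpha> l) n - MH \<alpha> l n)"
proof -
  let ?z = "\<lambda>n. a n - l n"
  let ?p1 = "Dr r (MH \<alpha> (Dr r ?z))" and ?p2 = "MH \<alpha> ?z"
  let ?p3 = "Dr r (MH \<alpha> (\<lambda>n. Dr r l n - l n))" and ?p4 = "\<lambda>n. Dr r (MH \<alpha> l) n - MH \<alpha> l n"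
  have z: "?z \<in> l2" by (rule l2_diff(1)[OF a l])
  have p1: "?p1 \<in> l2" "l2norm ?p1 \<le> l2norm (MH \<alpha> (Dr r ?z))"
    by (rule Dr_l2[OF MH_l2(1)[OF Dr_l2(1)[OF z r]] r])+
  have p3: "?p3 \<in> l2" "l2norm ?p3 \<le> C * l2norm (\<lambda>n. Dr r l n - l n)"
    using Dr_l2[OF MH_l2(1)[OF Dr_minus_l2(1)[OF l r]] r] MH_l2(2)[OF Dr_minus_l2(1)[OF l r]]
    by auto
  have q1: "(\<lambda>m. ?p1 m - ?p2 m) \<in> l2" "l2norm (\<lambda>m. ?p1 m - ?p2 m) \<le> l2norm ?p1 + l2norm ?p2"
    by (rule l2_diff[OF p1(1) MH_l2(1)[OF z]])+
  have q2: "(\<lambda>m. ?p3 m + ?p4 m) \<in> l2" "l2norm (\<lambda>m. ?p3 m + ?p4 m) \<le> l2norm ?p3 + l2norm ?p4"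
    by (rule l2_add[OF p3(1) Dr_minus_l2(1)[OF MH_l2(1)[OF l] r]])+
  have "l2norm (MH (Dr r \<alpha>) a - MH \<alpha> a) = l2norm (\<lambda>m. (?p1 m - ?p2 m) + (?p3 m + ?p4 m))"
    by (rule l2norm_cong) (rule MH_Dr_minus_decomposition[OF a l r])
  also have "\<dots> \<le> l2norm (\<lambda>m. ?p1 m - ?p2 m) + l2norm (\<lambda>m. ?p3 m + ?p4 m)"
    by (rule l2_add(2)[OF q1(1) q2(1)])
  finally show ?thesis using q1(2) q2(2) p1(2) p3(2) by linarith
qed

section \<open>Compactness of \<open>M(\<alpha>)\<close>\<close>

lemma MH_Dr_minus_tendsto_zero:
  assumes compact: "compact_op (MH \<alpha>)"
    and w: "\<And>k. w k \<in> l2" "\<And>k. l2norm (w k) \<le> 1" and l: "l \<in> l2" "l2norm l \<le> 1"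
    and weak: "\<And>n. n \<ge> 1 \<Longrightarrow> (\<lambda>k. w k n) \<longlonglongrightarrow> l n"
    and \<rho>: "\<And>k. 0 \<le> \<rho> k" "\<And>k. \<rho> k \<le> 1" "\<rho> \<longlonglongrightarrow> 1"
  shows "(\<lambda>k. l2norm (MH (Dr (\<rho> k) \<alpha>) (w k) - MH \<alpha> (w k))) \<longlonglongrightarrow> 0"
proof -
  define z where "z k = (\<lambda>n. w k n - l n)" for k
  have z: "z k \<in> l2" "l2norm (z k) \<le> 2" for k
    using l2_diff[OF w(1)[of k] l(1)] w(2)[of k] l(2) by (auto simp: z_def)
  have z_null: "(\<lambda>k. z k n) \<longlonglongrightarrow> 0" if "n \<ge> 1" for n
    using tendsto_diff[OF weak[OF that] tendsto_const[of "l n"]] by (simp add: z_def)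
  have Dz: "Dr (\<rho> k) (z k) \<in> l2" "l2norm (Dr (\<rho> k) (z k)) \<le> 2" for k
    using Dr_l2[OF z(1)[of k] \<rho>(1,2)[of k]] z(2)[of k] by auto
  have Dz_null: "(\<lambda>k. Dr (\<rho> k) (z k) n) \<longlonglongrightarrow> 0" if "n \<ge> 1" for n
    by (rule Lim_null_comparison[OF always_eventually tendsto_norm_zero[OF z_null[OF that]]])
      (simp add: norm_Dr_le \<rho>)
  define g where "g k = l2norm (MH \<alpha> (Dr (\<rho> k) (z k))) + l2norm (MH \<alpha> (z k))
    + C * l2norm (\<lambda>n. Dr (\<rho> k) l n - l n) + l2norm (\<lambda>n. Dr (\<rho> k) (MH \<alpha> l) n - MH \<alpha> l n)" for k
  have "g \<longlonglongrightarrow> 0 + 0 + C * 0 + 0"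
    unfolding g_def
    using compact_imp_MH_tendsto_zero[OF compact Dz Dz_null] compact_imp_MH_tendsto_zero[OF compact z z_null]
      Dr_tendsto_self[OF l(1) \<rho>] Dr_tendsto_self[OF MH_l2(1)[OF l(1)] \<rho>]
    by (intro tendsto_intros)
  then have g: "g \<longlonglongrightarrow> 0" by simp
  have "l2norm (MH (Dr (\<rho> k) \<alpha>) (w k) - MH \<alpha> (w k)) \<le> g k" for k
    unfolding g_def z_def by (rule MH_Dr_minus_norm_le[OF w(1) l(1) \<rho>(1,2)])
  then have "\<forall>k. norm (l2norm (MH (Dr (\<rho> k) \<alpha>) (w k) - MH \<alpha> (w k))) \<le> g k"
    by (simp add: l2norm_nonneg)
  then show ?thesis using g by (rule Lim_null_comparison[OF always_eventually])
qed

lemma compact_imp_MH_Dr_tendsto: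
  assumes compact: "compact_op (MH \<alpha>)"
  shows "((\<lambda>r. op_norm (\<lambda>a. MH (Dr r \<alpha>) a - MH \<alpha> a)) \<longlongrightarrow> 0) (at_left 1)"
proof (rule tendsto_at_left_sequentially[of 0])
  fix S :: "nat \<Rightarrow> real" assume S: "\<And>n. S n < 1" "\<And>n. 0 < S n" "incseq S" "S \<longlonglongrightarrow> 1"
  show "(\<lambda>n. op_norm (\<lambda>a. MH (Dr (S n) \<alpha>) a - MH \<alpha> a)) \<longlonglongrightarrow> 0"
  proof (rule LIMSEQ_zero_by_subseq)
    show "0 \<le> op_norm (\<lambda>a. MH (Dr (S k) \<alpha>) a - MH \<alpha> a)" for k
      using S(1,2)[of k] by (intro op_norm_MH_Dr_minus_nonneg) auto
    fix \<epsilon> :: real and s :: "nat \<Rightarrow> nat"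
    assume "\<epsilon> > 0" "strict_mono s" and large: "\<And>j. \<epsilon> \<le> op_norm (\<lambda>a. MH (Dr (S (s j)) \<alpha>) a - MH \<alpha> a)"
    have "\<forall>j. \<exists>a. a \<in> l2 \<and> l2norm a \<le> 1 \<and> \<epsilon> / 2 < l2norm (MH (Dr (S (s j)) \<alpha>) a - MH \<alpha> a)"
    proof
      fix j
      have "\<epsilon> / 2 < op_norm (\<lambda>a. MH (Dr (S (s j)) \<alpha>) a - MH \<alpha> a)" using large[of j] \<open>\<epsilon> > 0\<close> by linarith
      then obtain a where "a \<in> l2" "l2norm a \<le> 1" "\<epsilon> / 2 < l2norm (MH (Dr (S (s j)) \<alpha>) a - MH \<alpha> a)"
        by (rule op_norm_less_imp)
      then show "\<exists>a. a \<in> l2 \<and> l2norm a \<le> 1 \<and> \<epsilon> / 2 < l2norm (MH (Dr (S (s j)) \<alpha>) a - MH \<alpha> a)"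
        by blast
    qed
    from choice[OF this] obtain a where a: "\<forall>j. a j \<in> l2 \<and> l2norm (a j) \<le> 1
        \<and> \<epsilon> / 2 < l2norm (MH (Dr (S (s j)) \<alpha>) (a j) - MH \<alpha> (a j))"
      by (elim exE) (rule that)
    then have a_unit: "\<And>j. a j \<in> l2" "\<And>j. l2norm (a j) \<le> 1" by auto
    obtain s' l where s': "strict_mono s'" "l \<in> l2" "l2norm l \<le> 1"
        "\<And>n. n \<ge> 1 \<Longrightarrow> (\<lambda>k. a (s' k) n) \<longlonglongrightarrow> l n"
      by (rule l2_unit_ball_weakly_seq_compact[OF a_unit]) (rule that)
    have "(\<lambda>k. S (s (s' k))) \<longlonglongrightarrow> 1"
      using LIMSEQ_subseq_LIMSEQ[OF S(4) strict_mono_o[OF \<open>strict_mono s\<close> s'(1)]] by (simp add: o_def)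
    then have "(\<lambda>k. l2norm (MH (Dr (S (s (s' k))) \<alpha>) (a (s' k)) - MH \<alpha> (a (s' k)))) \<longlonglongrightarrow> 0"
      using S(1,2) by (intro MH_Dr_minus_tendsto_zero[OF compact a_unit s'(2-4)]) (auto intro: less_imp_le)
    then have "eventually (\<lambda>k. l2norm (MH (Dr (S (s (s' k))) \<alpha>) (a (s' k)) - MH \<alpha> (a (s' k))) < \<epsilon> / 2)
        sequentially"
      using \<open>\<epsilon> > 0\<close> by (intro order_tendstoD) auto
    then obtain k where "l2norm (MH (Dr (S (s (s' k))) \<alpha>) (a (s' k)) - MH \<alpha> (a (s' k))) < \<epsilon> / 2"
      by (auto simp: eventually_sequentially)
    with a show False by (meson not_less_iff_gr_or_eq order_less_trans)
  qed
qed simp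

lemma l2norm_MH_le_Dr_op_norm:
  assumes a: "a \<in> l2" and r: "0 \<le> r" "r \<le> 1"
  shows "l2norm (MH \<alpha> a)
    \<le> C * l2norm (Dr r a) + op_norm (\<lambda>a. MH (Dr r \<alpha>) a - MH \<alpha> a) * l2norm a"
proof -
  let ?u = "Dr r (MH \<alpha> (Dr r a))" and ?T = "MH (Dr r \<alpha>) a - MH \<alpha> a"
  have Da: "Dr r a \<in> l2" by (rule Dr_l2(1)[OF a r])
  have u: "?u \<in> l2" "l2norm ?u \<le> C * l2norm (Dr r a)"
    using Dr_l2[OF MH_l2(1)[OF Da] r] MH_l2(2)[OF Da] by auto
  have "l2norm (MH \<alpha> a) = l2norm (\<lambda>m. ?u m - ?T m)"
    by (rule l2norm_cong) (simp add: MH_Dr)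
  also have "\<dots> \<le> l2norm ?u + l2norm ?T"
    using MH_Dr_minus_l2(1)[OF a r] by (intro l2_diff(2) u(1)) (auto simp: fun_diff_def)
  finally show ?thesis using u(2) l2norm_MH_Dr_minus_le_op_norm[OF a r] by linarith
qed

lemma MH_tendsto_zero_if_MH_Dr_tendsto:
  fixes z :: "nat \<Rightarrow> nat \<Rightarrow> complex"
  assumes lim: "((\<lambda>r. op_norm (\<lambda>a. MH (Dr r \<alpha>) a - MH \<alpha> a)) \<longlongrightarrow> 0) (at_left 1)"
    and z: "\<And>k. z k \<in> l2" "\<And>k. l2norm (z k) \<le> B"
    and null: "\<And>n. n \<ge> 1 \<Longrightarrow> (\<lambda>k. z k n) \<longlonglongrightarrow> 0"
  shows "(\<lambda>k. l2norm (MH \<alpha> (z k))) \<longlonglongrightarrow> 0"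
proof (rule LIMSEQ_zero_by_approx[OF l2norm_nonneg])
  fix \<eta> :: real assume "\<eta> > 0"
  have B: "0 \<le> B" using z(2)[of 0] l2norm_nonneg[of "z 0"] by linarith
  have "eventually (\<lambda>r. op_norm (\<lambda>a. MH (Dr r \<alpha>) a - MH \<alpha> a) < \<eta> / (B + 1)) (at_left 1)"
    using lim \<open>\<eta> > 0\<close> B by (intro order_tendstoD) auto
  moreover have "eventually (\<lambda>r. r \<in> {0<..<1}) (at_left (1::real))"
    by (rule eventually_at_left_real) simp
  ultimately have "\<exists>r. op_norm (\<lambda>a. MH (Dr r \<alpha>) a - MH \<alpha> a) < \<eta> / (B + 1) \<and> r \<in> {0<..<1}"
    by (intro eventually_happens'[OF trivial_limit_at_left_real] eventually_conj)
  then obtain r where r: "op_norm (\<lambda>a. MH (Dr r \<alpha>) a - MH \<alpha> a) < \<eta> / (B + 1)" "0 \<le> r" "r < 1"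
    by auto
  have small: "op_norm (\<lambda>a. MH (Dr r \<alpha>) a - MH \<alpha> a) * l2norm (z k) \<le> \<eta>" for k
  proof -
    have "op_norm (\<lambda>a. MH (Dr r \<alpha>) a - MH \<alpha> a) * l2norm (z k) \<le> \<eta> / (B + 1) * B"
      using r z(2)[of k] op_norm_MH_Dr_minus_nonneg[of r] l2norm_nonneg[of "z k"]
      by (intro mult_mono) auto
    also have "\<dots> \<le> \<eta>" using \<open>\<eta> > 0\<close> B by (simp add: field_simps)
    finally show ?thesis .
  qed
  have "l2norm (MH \<alpha> (z k)) \<le> C * l2norm (Dr r (z k)) + \<eta>" for k
    using l2norm_MH_le_Dr_op_norm[OF z(1)[of k] r(2) less_imp_le[OF r(3)]] small[of k] by linarith
  moreover have "(\<lambda>k. C * l2norm (Dr r (z k))) \<longlonglongrightarrow> 0"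
    using Dr_tendsto_zero[OF r(2,3) z null] by (rule tendsto_mult_right_zero)
  ultimately show "\<exists>g. g \<longlonglongrightarrow> 0 \<and> (\<forall>k. l2norm (MH \<alpha> (z k)) \<le> g k + \<eta>)" by auto
qed

lemma MH_Dr_tendsto_imp_compact:
  assumes lim: "((\<lambda>r. op_norm (\<lambda>a. MH (Dr r \<alpha>) a - MH \<alpha> a)) \<longlongrightarrow> 0) (at_left 1)"
  shows "compact_op (MH \<alpha>)"
  unfolding compact_op_def
proof (intro allI impI)
  fix x :: "nat \<Rightarrow> nat \<Rightarrow> complex" assume "\<forall>k. x k \<in> l2 \<and> l2norm (x k) \<le> 1"
  then have x: "\<And>k. x k \<in> l2" "\<And>k. l2norm (x k) \<le> 1" by auto
  obtain s l where s: "strict_mono s" and l: "l \<in> l2" "l2norm l \<le> 1"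
      and weak: "\<And>n. n \<ge> 1 \<Longrightarrow> (\<lambda>k. x (s k) n) \<longlonglongrightarrow> l n"
    by (rule l2_unit_ball_weakly_seq_compact[OF x]) (rule that)
  define z where "z k = (\<lambda>n. x (s k) n - l n)" for k
  have z: "z k \<in> l2" "l2norm (z k) \<le> 2" for k
    using l2_diff[OF x(1)[of "s k"] l(1)] x(2)[of "s k"] l(2) by (auto simp: z_def)
  have z_null: "(\<lambda>k. z k n) \<longlonglongrightarrow> 0" if "n \<ge> 1" for n
    using tendsto_diff[OF weak[OF that] tendsto_const[of "l n"]] by (simp add: z_def)
  have "l2norm (MH \<alpha> (x (s k)) - MH \<alpha> l) = l2norm (MH \<alpha> (z k))" for k
    by (rule l2norm_cong) (simp add: z_def MH_diff[OF x(1)[of "s k"] l(1)])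
  with MH_tendsto_zero_if_MH_Dr_tendsto[OF lim z z_null]
  have "(\<lambda>k. l2norm (MH \<alpha> (x (s k)) - MH \<alpha> l)) \<longlonglongrightarrow> 0" by simp
  then show "\<exists>s b. strict_mono s \<and> b \<in> l2 \<and> (\<lambda>k. l2norm (MH \<alpha> (x (s k)) - b)) \<longlonglongrightarrow> 0"
    using s MH_l2(1)[OF l(1)] by blast
qed

end

lemma MH_bounded_imp_bounded_by:
  assumes "MH_bounded \<alpha>"
  obtains C where "MH_bounded_by \<alpha> C"
proof -
  obtain C where C: "\<And>a b. fin_supp a \<Longrightarrow> fin_supp b \<Longrightarrow> cmod (MH_form \<alpha> a b) \<le> C * l2norm a * l2norm b"
    using assms unfolding MH_bounded_def by blast
  have "MH_bounded_by \<alpha> (max C 0)"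
  proof
    fix a b assume "fin_supp a" "fin_supp b"
    moreover have "C * l2norm a * l2norm b \<le> max C 0 * l2norm a * l2norm b"
      by (intro mult_right_mono l2norm_nonneg) simp
    ultimately show "cmod (MH_form \<alpha> a b) \<le> max C 0 * l2norm a * l2norm b"
      using C by (meson order_trans)
  qed simp
  then show ?thesis by (rule that)
qed

theorem proposition5:
  fixes \<alpha> :: "nat \<Rightarrow> complex"
  assumes "MH_bounded \<alpha>"
  shows "compact_op (MH \<alpha>) \<longleftrightarrow>
         ((\<lambda>r. op_norm (\<lambda>a. MH (Dr r \<alpha>) a - MH \<alpha> a)) \<longlongrightarrow> 0) (at_left 1)"
proof -
  obtain C where "MH_bounded_by \<alpha> C" using assms by (rule MH_bounded_imp_bounded_by)
  then interpret MH_bounded_by \<alpha> C .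
  show ?thesis using compact_imp_MH_Dr_tendsto MH_Dr_tendsto_imp_compact by blast
qed

end
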